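(* Let $r$, $w$, and $t$ be positive integers with $t \geq r+w$. Let $t'$ be an integer with $0 \le t' \le t$ at which the function $x \mapsto \binom{x}{r}\binom{t-x}{w}$, defined on the integers $0 \le x \le t$, attains its maximum. If $d=\binom{t-r-w}{t'-r}$, then $$N((r,w;d),t)=bc_{d}(I_{t}(r,w))=bp_{d}(I_{t}(r,w))=\binom{t}{t'}.$$
   Context: Let $d,n,t,r,w$ be positive integers. A pair $(X,\mathcal B)$, where $X$ is a set of $n$ points and $\mathcal B=\{B_1,\ldots,B_t\}$ is a collection of $t$ subsets (blocks) of $X$, is an $(r,w;d)$-cover-free family with $t$ blocks if for any two sets of indices $L,M\subseteq\{1,\ldots,t\}$ with $L\cap M=\emptyset$, $|L|=r$, $|M|=w$, one has $\left|\left(\bigcap_{l\in L}B_l\right)\setminus\left(\bigcup_{m\in M}B_m\right)\right|\ge d$. $N((r,w;d),t)$ denotes the minimum number of points $|X|$ of an $(r,w;d)$-cover-free family having $t$ blocks. The bi-intersection graph $I_t(r,w)$ is the bipartite graph whose vertices are all $r$-subsets and all $w$-subsets of $\{1,\ldots,t\}$ (one part consisting of the $r$-subsets, the other of the $w$-subsets), where an $r$-subset is adjacent to a $w$-subset if and only if they are disjoint. A biclique of a graph $G$ is a complete bipartite subgraph of $G$. The $d$-biclique covering number $bc_d(G)$ (resp. $d$-biclique partition number $bp_d(G)$) is the minimum number of bicliques of $G$ such that every edge of $G$ belongs to at least $d$ (resp. exactly $d$) of these bicliques. Binomial coefficients $\binom{a}{b}$ are $0$ when $b<0$ or $b>a$.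 *)

theory Defs
  imports Main
begin

text \<open>Cover-free families. Blocks are indexed by 1..t; points are natural numbers
  (any finite point set can be relabelled into nat).\<close>

definition cover_free_family ::
  "nat \<Rightarrow> nat \<Rightarrow> nat \<Rightarrow> nat \<Rightarrow> nat set \<Rightarrow> (nat \<Rightarrow> nat set) \<Rightarrow> bool" where
  "cover_free_family r w d t X B \<longleftrightarrow>
     finite X \<and> (\<forall>i\<in>{1..t}. B i \<subseteq> X) \<and>
     (\<forall>L M. L \<subseteq> {1..t} \<and> M \<subseteq> {1..t} \<and> L \<inter> M = {} \<and> card L = r \<and> card M = w \<longrightarrow>
        d \<le> card ((\<Inter>l\<in>L. B l) - (\<Union>m\<in>M. B m)))"

definition N_cff :: "nat \<Rightarrow> nat \<Rightarrow> nat \<Rightarrow> nat \<Rightarrow> nat" where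
  "N_cff r w d t = (LEAST n. \<exists>X B. cover_free_family r w d t X B \<and> card X = n)"

type_synonym ('a, 'b) bigraph = "'a set \<times> 'b set \<times> ('a \<times> 'b) set"

definition bi_intersection_graph :: "nat \<Rightarrow> nat \<Rightarrow> nat \<Rightarrow> (nat set, nat set) bigraph" where
  "bi_intersection_graph t r w =
     ({R. R \<subseteq> {1..t} \<and> card R = r},
      {W. W \<subseteq> {1..t} \<and> card W = w},
      {(R, W). R \<subseteq> {1..t} \<and> card R = r \<and> W \<subseteq> {1..t} \<and> card W = w \<and> R \<inter> W = {}})"

definition bg_edges :: "('a, 'b) bigraph \<Rightarrow> ('a \<times> 'b) set" where
  "bg_edges G = snd (snd G)"

definition biclique :: "('a, 'b) bigraph \<Rightarrow> 'a set \<times> 'b set \<Rightarrow> bool" where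
  "biclique G AB \<longleftrightarrow> fst AB \<subseteq> fst G \<and> snd AB \<subseteq> fst (snd G) \<and>
                      fst AB \<times> snd AB \<subseteq> bg_edges G"

definition bc_d :: "nat \<Rightarrow> ('a, 'b) bigraph \<Rightarrow> nat" where
  "bc_d d G = (LEAST k. \<exists>f :: nat \<Rightarrow> 'a set \<times> 'b set.
      (\<forall>i<k. biclique G (f i)) \<and>
      (\<forall>e\<in>bg_edges G. d \<le> card {i. i < k \<and> e \<in> fst (f i) \<times> snd (f i)}))"

definition bp_d :: "nat \<Rightarrow> ('a, 'b) bigraph \<Rightarrow> nat" where
  "bp_d d G = (LEAST k. \<exists>f :: nat \<Rightarrow> 'a set \<times> 'b set.
      (\<forall>i<k. biclique G (f i)) \<and>
      (\<forall>e\<in>bg_edges G. card {i. i < k \<and> e \<in> fst (f i) \<times> snd (f i)} = d))"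

end

theory Submission
  imports Defs
begin

text \<open>A biclique (A, B) of \<open>I\<^sub>t(r,w)\<close> has \<open>|A| |B| \<le> C(|U|,r) C(t-|U|,w) \<le> m\<close>, where U is the union
  of A and \<open>m = max\<^sub>x C(x,r) C(t-x,w)\<close>, because B consists of w-sets missing U. Double counting
  gives \<open>d |E| \<le> k m\<close> for every d-fold biclique cover with k members, and
  \<open>d |E| = C(t,t') m\<close>, so \<open>k \<ge> C(t,t')\<close>. An (r,w;d)-cover-free family is such a cover: a point p
  yields the biclique of the r-sets of blocks containing p and the w-sets of blocks missing p.
  Conversely, the t'-subsets T of \<open>{1..t}\<close> give a d-fold biclique partition (r-subsets of T
  against w-subsets of its complement) and a cover-free family (points T, block i consisting of
  the T containing i) of size C(t,t').\<close>

lemma bg_edges_bi_intersection_graph [simp]: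
  "bg_edges (bi_intersection_graph t r w) =
     {(R, W). R \<subseteq> {1..t} \<and> card R = r \<and> W \<subseteq> {1..t} \<and> card W = w \<and> R \<inter> W = {}}"
  by (simp add: bg_edges_def bi_intersection_graph_def)

lemma biclique_bi_intersection_graph_iff:
  "biclique (bi_intersection_graph t r w) (A, B) \<longleftrightarrow>
     (\<forall>R\<in>A. R \<subseteq> {1..t} \<and> card R = r) \<and> (\<forall>W\<in>B. W \<subseteq> {1..t} \<and> card W = w) \<and>
     (\<forall>R\<in>A. \<forall>W\<in>B. R \<inter> W = {})"
  by (auto simp: biclique_def bi_intersection_graph_def bg_edges_def disjoint_iff)

lemma finite_bg_edges_bi_intersection_graph: "finite (bg_edges (bi_intersection_graph t r w))"
  by (rule finite_subset[of _ "Pow {1..t} \<times> Pow {1..t}"]) auto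

lemma card_bg_edges_bi_intersection_graph:
  "card (bg_edges (bi_intersection_graph t r w)) = (t choose r) * ((t - r) choose w)"
proof -
  have "bg_edges (bi_intersection_graph t r w) =
      Sigma {R. R \<subseteq> {1..t} \<and> card R = r} (\<lambda>R. {W. W \<subseteq> {1..t} - R \<and> card W = w})"
    by auto
  moreover have "card {W. W \<subseteq> {1..t} - R \<and> card W = w} = (t - r) choose w"
    if "R \<subseteq> {1..t}" "card R = r" for R
    using that n_subsets[of "{1..t} - R" w] by (simp add: card_Diff_subset finite_subset)
  ultimately show ?thesis
    by (simp add: card_SigmaI n_subsets)
qed

lemma card_biclique_product_le:
  assumes "biclique (bi_intersection_graph t r w) (A, B)"
    and "\<forall>x\<le>t. (x choose r) * ((t - x) choose w) \<le> m"
  shows "card A * card B \<le> m"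
proof -
  define U where "U = \<Union>A"
  have A: "\<forall>R\<in>A. R \<subseteq> {1..t} \<and> card R = r" and B: "\<forall>W\<in>B. W \<subseteq> {1..t} \<and> card W = w"
    and disj: "\<forall>R\<in>A. \<forall>W\<in>B. R \<inter> W = {}"
    using assms(1) by (simp_all add: biclique_bi_intersection_graph_iff)
  have U: "U \<subseteq> {1..t}"
    using A unfolding U_def by auto
  then have finU: "finite U"
    using finite_subset by blast
  have "A \<subseteq> {R. R \<subseteq> U \<and> card R = r}"
    using A unfolding U_def by auto
  then have "card A \<le> card U choose r"
    using card_mono[of "{R. R \<subseteq> U \<and> card R = r}" A] finU by (simp add: n_subsets)
  moreover have "B \<subseteq> {W. W \<subseteq> {1..t} - U \<and> card W = w}"
    using B disj unfolding U_def by blast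
  then have "card B \<le> (t - card U) choose w"
    using card_mono[of "{W. W \<subseteq> {1..t} - U \<and> card W = w}" B] U finU
    by (simp add: n_subsets card_Diff_subset)
  ultimately have "card A * card B \<le> (card U choose r) * ((t - card U) choose w)"
    by (rule mult_le_mono)
  also have "\<dots> \<le> m"
    using assms(2) card_mono[OF _ U] by simp
  finally show ?thesis .
qed

lemma double_count_cover_bound:
  fixes Q :: "'i \<Rightarrow> 'e set"
  assumes "finite I" "finite E" "\<forall>i\<in>I. Q i \<subseteq> E" "\<forall>i\<in>I. card (Q i) \<le> m"
    and "\<forall>e\<in>E. d \<le> card {i\<in>I. e \<in> Q i}"
  shows "d * card E \<le> card I * m"
proof -
  have "d * card E = (\<Sum>e\<in>E. d)" by simp
  also have "\<dots> \<le> (\<Sum>e\<in>E. card {i\<in>I. e \<in> Q i})"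
    using assms(5) by (intro sum_mono) simp
  also have "\<dots> = (\<Sum>i\<in>I. card {e\<in>E. e \<in> Q i})"
    by (rule sum_multicount_gen[OF assms(1,2), symmetric]) simp
  also have "\<dots> = (\<Sum>i\<in>I. card (Q i))"
    using assms(3) by (intro sum.cong) (auto intro: arg_cong[where f = card])
  also have "\<dots> \<le> card I * m"
    using sum_mono[of I "\<lambda>i. card (Q i)" "\<lambda>_. m"] assms(4) by simp
  finally show ?thesis .
qed

definition point_biclique :: "nat \<Rightarrow> nat \<Rightarrow> nat \<Rightarrow> (nat \<Rightarrow> nat set) \<Rightarrow> nat \<Rightarrow> nat set set \<times> nat set set" where
  "point_biclique t r w B p =
     ({R. R \<subseteq> {1..t} \<and> card R = r \<and> (\<forall>l\<in>R. p \<in> B l)},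
      {W. W \<subseteq> {1..t} \<and> card W = w \<and> (\<forall>m\<in>W. p \<notin> B m)})"

lemma biclique_point_biclique: "biclique (bi_intersection_graph t r w) (point_biclique t r w B p)"
  by (auto simp: point_biclique_def biclique_bi_intersection_graph_iff)

lemma cover_free_family_point_biclique_cover:
  assumes "cover_free_family r w d t X B" and "r > 0"
    and "(L, M) \<in> bg_edges (bi_intersection_graph t r w)"
  shows "d \<le> card {p\<in>X. (L, M) \<in> fst (point_biclique t r w B p) \<times> snd (point_biclique t r w B p)}"
proof -
  have LM: "L \<subseteq> {1..t}" "M \<subseteq> {1..t}" "L \<inter> M = {}" "card L = r" "card M = w"
    using assms(3) by auto
  obtain l where "l \<in> L"
    using LM(4) \<open>r > 0\<close> by fastforce
  then have "(\<Inter>l\<in>L. B l) \<subseteq> X"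
    using assms(1) LM(1) unfolding cover_free_family_def by blast
  then have sub: "(\<Inter>l\<in>L. B l) - (\<Union>m\<in>M. B m) \<subseteq>
      {p\<in>X. (L, M) \<in> fst (point_biclique t r w B p) \<times> snd (point_biclique t r w B p)}"
    using LM by (auto simp: point_biclique_def)
  have "finite X"
    using assms(1) unfolding cover_free_family_def by blast
  have "d \<le> card ((\<Inter>l\<in>L. B l) - (\<Union>m\<in>M. B m))"
    using assms(1) LM unfolding cover_free_family_def by blast
  also have "\<dots> \<le> card {p\<in>X. (L, M) \<in> fst (point_biclique t r w B p) \<times> snd (point_biclique t r w B p)}"
    using sub \<open>finite X\<close> by (intro card_mono) simp_all
  finally show ?thesis .
qed

text \<open>Both sides count the triples (T, L, M) with \<open>|T| = t'\<close>, \<open>|L| = r\<close>, \<open>|M| = w\<close>,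
  \<open>L \<subseteq> T\<close> and \<open>M \<inter> T = {}\<close>.\<close>

lemma choose_product_double_count:
  fixes r w t t' :: nat
  assumes "r \<le> t'" "t' \<le> t" "w \<le> t - t'"
  shows "(t choose t') * ((t' choose r) * ((t - t') choose w)) =
         ((t choose r) * ((t - r) choose w)) * ((t - r - w) choose (t' - r))"
proof -
  define n a where "n = t - r" and "a = t' - r"
  have "a \<le> n" "w \<le> n - a" "t - t' = n - a" "a \<le> n - w"
    using assms unfolding n_def a_def by auto
  have "(n choose a) * ((n - a) choose w) = (n choose (n - a)) * ((n - a) choose w)"
    using binomial_symmetric[OF \<open>a \<le> n\<close>] by simp
  also have "\<dots> = (n choose w) * ((n - w) choose (n - a - w))"
    using choose_mult[OF \<open>w \<le> n - a\<close>] by simp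
  also have "(n - w) choose (n - a - w) = (n - w) choose a"
    using binomial_symmetric[OF \<open>a \<le> n - w\<close>] by (simp add: add.commute)
  finally have "(n choose a) * ((n - a) choose w) = (n choose w) * ((n - w) choose a)" .
  moreover have "(t choose t') * (t' choose r) = (t choose r) * (n choose a)"
    using choose_mult[OF assms(1,2)] unfolding n_def a_def .
  ultimately show ?thesis
    using \<open>t - t' = n - a\<close> unfolding n_def a_def
    by (metis diff_diff_left mult.assoc)
qed

lemma card_supersets_avoiding:
  assumes "L \<subseteq> {1..t}" "M \<subseteq> {1..t}" "L \<inter> M = {}" "card L = r" "card M = w" "r \<le> k"
  shows "card {T. T \<subseteq> {1..t} \<and> card T = k \<and> L \<subseteq> T \<and> T \<inter> M = {}} = (t - r - w) choose (k - r)"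
proof -
  define D where "D = {1..t} - (L \<union> M)"
  have "finite L" "finite M"
    using assms(1,2) finite_subset by auto
  then have "card D = t - r - w"
    using assms card_Diff_subset[of "L \<union> M" "{1..t}"] card_Un_disjoint[of L M]
    unfolding D_def by simp
  have "bij_betw (\<lambda>U. U \<union> L) {U. U \<subseteq> D \<and> card U = k - r}
      {T. T \<subseteq> {1..t} \<and> card T = k \<and> L \<subseteq> T \<and> T \<inter> M = {}}"
  proof (rule bij_betw_byWitness[where f' = "\<lambda>T. T - L"])
    show "(\<lambda>U. U \<union> L) ` {U. U \<subseteq> D \<and> card U = k - r}
        \<subseteq> {T. T \<subseteq> {1..t} \<and> card T = k \<and> L \<subseteq> T \<and> T \<inter> M = {}}"
    proof safe
      fix U assume "U \<subseteq> D" "card U = k - r"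
      moreover have "finite U" "U \<inter> L = {}"
        using \<open>U \<subseteq> D\<close> finite_subset unfolding D_def by auto
      ultimately show "card (U \<union> L) = k"
        using card_Un_disjoint[of U L] \<open>finite L\<close> assms(4,6) by simp
    qed (use assms(1,3) D_def in auto)
    show "(\<lambda>T. T - L) ` {T. T \<subseteq> {1..t} \<and> card T = k \<and> L \<subseteq> T \<and> T \<inter> M = {}}
        \<subseteq> {U. U \<subseteq> D \<and> card U = k - r}"
      using card_Diff_subset[OF \<open>finite L\<close>] assms(4) by (auto simp: D_def)
  qed (auto simp: D_def)
  then show ?thesis
    using bij_betw_same_card n_subsets[of D "k - r"] \<open>card D = t - r - w\<close>
    by (fastforce simp: D_def)
qed

lemma card_filter_bij_betw:
  assumes "bij_betw g A S"
  shows "card {i\<in>A. P (g i)} = card {x\<in>S. P x}"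
proof (rule bij_betw_same_card, rule bij_betw_subset[OF assms])
  show "g ` {i\<in>A. P (g i)} = {x\<in>S. P x}"
    using assms unfolding bij_betw_def by auto
qed auto

context
  fixes r w t t' :: nat
  assumes r_w_le: "r + w \<le> t" and t'_le: "t' \<le> t"
    and maximal: "\<forall>x\<le>t. (x choose r) * ((t - x) choose w) \<le> (t' choose r) * ((t - t') choose w)"
begin

lemma maximum_pos: "0 < (t' choose r) * ((t - t') choose w)"
proof -
  have "0 < (r choose r) * ((t - r) choose w)"
    using r_w_le by simp
  also have "\<dots> \<le> (t' choose r) * ((t - t') choose w)"
    using maximal[rule_format, of r] r_w_le by simp
  finally show ?thesis .
qed

lemma maximizer_bounds: "r \<le> t'" "w \<le> t - t'"
  using maximum_pos by auto

lemma biclique_cover_card_ge: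
  fixes P :: "'i \<Rightarrow> nat set set \<times> nat set set"
  assumes "finite I"
    and "\<forall>i\<in>I. biclique (bi_intersection_graph t r w) (P i)"
    and "\<forall>e\<in>bg_edges (bi_intersection_graph t r w).
           (t - r - w) choose (t' - r) \<le> card {i\<in>I. e \<in> fst (P i) \<times> snd (P i)}"
  shows "t choose t' \<le> card I"
proof -
  define m where "m = (t' choose r) * ((t - t') choose w)"
  have "card (fst (P i) \<times> snd (P i)) \<le> m" if "i \<in> I" for i
    using card_biclique_product_le[of t r w "fst (P i)" "snd (P i)" m] assms(2) that maximal
    by (simp add: m_def card_cartesian_product)
  moreover have "fst (P i) \<times> snd (P i) \<subseteq> bg_edges (bi_intersection_graph t r w)" if "i \<in> I" for i
    using assms(2) that unfolding biclique_def by blast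
  ultimately have "((t - r - w) choose (t' - r)) * card (bg_edges (bi_intersection_graph t r w))
      \<le> card I * m"
    using double_count_cover_bound[OF assms(1) finite_bg_edges_bi_intersection_graph[of t r w], of
        "\<lambda>i. fst (P i) \<times> snd (P i)" m] assms(3)
    by blast
  then have "(t choose t') * m \<le> card I * m"
    using choose_product_double_count[OF maximizer_bounds(1) t'_le maximizer_bounds(2)]
    unfolding m_def by (simp only: card_bg_edges_bi_intersection_graph) (metis mult.commute)
  then show ?thesis
    using maximum_pos unfolding m_def by simp
qed

lemma subsets_enumeration:
  obtains g :: "nat \<Rightarrow> nat set"
  where "\<And>i. i < t choose t' \<Longrightarrow> g i \<subseteq> {1..t} \<and> card (g i) = t'"
    and "\<And>L M. (L, M) \<in> bg_edges (bi_intersection_graph t r w) \<Longrightarrow>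
           card {i. i < t choose t' \<and> L \<subseteq> g i \<and> g i \<inter> M = {}} = (t - r - w) choose (t' - r)"
proof -
  define S where "S = {T. T \<subseteq> {1..t} \<and> card T = t'}"
  have "finite S" "card S = t choose t'"
    unfolding S_def by (simp_all add: n_subsets)
  then obtain g where g: "bij_betw g {..<t choose t'} S"
    using ex_bij_betw_nat_finite by (metis atLeast0LessThan)
  show ?thesis
  proof
    show "g i \<subseteq> {1..t} \<and> card (g i) = t'" if "i < t choose t'" for i
      using g that unfolding bij_betw_def S_def by auto
    fix L M assume "(L, M) \<in> bg_edges (bi_intersection_graph t r w)"
    then have "card {T. T \<subseteq> {1..t} \<and> card T = t' \<and> L \<subseteq> T \<and> T \<inter> M = {}} = (t - r - w) choose (t' - r)"
      using card_supersets_avoiding maximizer_bounds(1) by auto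
    then show "card {i. i < t choose t' \<and> L \<subseteq> g i \<and> g i \<inter> M = {}} = (t - r - w) choose (t' - r)"
      using card_filter_bij_betw[OF g, of "\<lambda>T. L \<subseteq> T \<and> T \<inter> M = {}"]
      by (simp add: S_def conj_assoc)
  qed
qed

lemma biclique_cover_length_ge:
  assumes "\<forall>i<k. biclique (bi_intersection_graph t r w) (f i)"
    and "\<forall>e\<in>bg_edges (bi_intersection_graph t r w).
           (t - r - w) choose (t' - r) \<le> card {i. i < k \<and> e \<in> fst (f i) \<times> snd (f i)}"
  shows "t choose t' \<le> k"
proof -
  have "t choose t' \<le> card {..<k}"
    using assms by (intro biclique_cover_card_ge) auto
  then show ?thesis
    by simp
qed

lemma ex_biclique_partition:
  "\<exists>f. (\<forall>i<t choose t'. biclique (bi_intersection_graph t r w) (f i)) \<and>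
     (\<forall>e\<in>bg_edges (bi_intersection_graph t r w).
        card {i. i < t choose t' \<and> e \<in> fst (f i) \<times> snd (f i)} = (t - r - w) choose (t' - r))"
proof -
  obtain g where g: "\<And>i. i < t choose t' \<Longrightarrow> g i \<subseteq> {1..t} \<and> card (g i) = t'"
    and count: "\<And>L M. (L, M) \<in> bg_edges (bi_intersection_graph t r w) \<Longrightarrow>
           card {i. i < t choose t' \<and> L \<subseteq> g i \<and> g i \<inter> M = {}} = (t - r - w) choose (t' - r)"
    using subsets_enumeration by blast
  define f where "f i = ({R. R \<subseteq> g i \<and> card R = r}, {W. W \<subseteq> {1..t} - g i \<and> card W = w})" for i
  have "biclique (bi_intersection_graph t r w) (f i)" if "i < t choose t'" for i
    using g[OF that] by (auto simp: f_def biclique_bi_intersection_graph_iff)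
  moreover have "card {i. i < t choose t' \<and> e \<in> fst (f i) \<times> snd (f i)} = (t - r - w) choose (t' - r)"
    if e: "e \<in> bg_edges (bi_intersection_graph t r w)" for e
  proof -
    obtain L M where LM: "e = (L, M)"
      by fastforce
    then have "{i. i < t choose t' \<and> e \<in> fst (f i) \<times> snd (f i)} =
        {i. i < t choose t' \<and> L \<subseteq> g i \<and> g i \<inter> M = {}}"
      using e by (auto simp: f_def)
    then show ?thesis
      using count e LM by simp
  qed
  ultimately show ?thesis
    by blast
qed

lemma bp_d_bi_intersection_graph:
  "bp_d ((t - r - w) choose (t' - r)) (bi_intersection_graph t r w) = t choose t'"
  unfolding bp_d_def
proof (rule Least_equality)
  fix k :: nat assume "\<exists>f. (\<forall>i<k. biclique (bi_intersection_graph t r w) (f i)) \<and>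
      (\<forall>e\<in>bg_edges (bi_intersection_graph t r w).
         card {i. i < k \<and> e \<in> fst (f i) \<times> snd (f i)} = (t - r - w) choose (t' - r))"
  then obtain f where "\<forall>i<k. biclique (bi_intersection_graph t r w) (f i)"
    and "\<forall>e\<in>bg_edges (bi_intersection_graph t r w).
           card {i. i < k \<and> e \<in> fst (f i) \<times> snd (f i)} = (t - r - w) choose (t' - r)"
    by blast
  then show "t choose t' \<le> k"
    by (intro biclique_cover_length_ge[of k f]) simp_all
qed (rule ex_biclique_partition)

lemma bc_d_bi_intersection_graph:
  "bc_d ((t - r - w) choose (t' - r)) (bi_intersection_graph t r w) = t choose t'"
  unfolding bc_d_def
proof (rule Least_equality)
  show "\<exists>f. (\<forall>i<t choose t'. biclique (bi_intersection_graph t r w) (f i)) \<and>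
      (\<forall>e\<in>bg_edges (bi_intersection_graph t r w).
         (t - r - w) choose (t' - r) \<le> card {i. i < t choose t' \<and> e \<in> fst (f i) \<times> snd (f i)})"
  proof -
    obtain f where "\<forall>i<t choose t'. biclique (bi_intersection_graph t r w) (f i)"
      and "\<forall>e\<in>bg_edges (bi_intersection_graph t r w).
             card {i. i < t choose t' \<and> e \<in> fst (f i) \<times> snd (f i)} = (t - r - w) choose (t' - r)"
      using ex_biclique_partition by blast
    then show ?thesis
      by (intro exI[of _ f]) simp
  qed
next
  fix k :: nat assume "\<exists>f. (\<forall>i<k. biclique (bi_intersection_graph t r w) (f i)) \<and>
      (\<forall>e\<in>bg_edges (bi_intersection_graph t r w).
         (t - r - w) choose (t' - r) \<le> card {i. i < k \<and> e \<in> fst (f i) \<times> snd (f i)})"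
  then show "t choose t' \<le> k"
    using biclique_cover_length_ge by blast
qed

lemma ex_cover_free_family_of_subsets:
  assumes "r > 0"
  shows "\<exists>B. cover_free_family r w ((t - r - w) choose (t' - r)) t {..<t choose t'} B"
proof -
  obtain g :: "nat \<Rightarrow> nat set" where "\<And>i. i < t choose t' \<Longrightarrow> g i \<subseteq> {1..t} \<and> card (g i) = t'"
    and count: "\<And>L M. (L, M) \<in> bg_edges (bi_intersection_graph t r w) \<Longrightarrow>
      card {i. i < t choose t' \<and> L \<subseteq> g i \<and> g i \<inter> M = {}} = (t - r - w) choose (t' - r)"
    using subsets_enumeration by blast
  define B where "B l = {i. i < t choose t' \<and> l \<in> g i}" for l
  have "(t - r - w) choose (t' - r) \<le> card ((\<Inter>l\<in>L. B l) - (\<Union>m\<in>M. B m))"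
    if "L \<subseteq> {1..t}" "M \<subseteq> {1..t}" "L \<inter> M = {}" "card L = r" "card M = w" for L M
  proof -
    have "L \<noteq> {}"
      using that(4) assms by auto
    then have "(\<Inter>l\<in>L. B l) - (\<Union>m\<in>M. B m) = {i. i < t choose t' \<and> L \<subseteq> g i \<and> g i \<inter> M = {}}"
      unfolding B_def by blast
    moreover have "(L, M) \<in> bg_edges (bi_intersection_graph t r w)"
      using that by simp
    ultimately show ?thesis
      using count by simp
  qed
  moreover have "B l \<subseteq> {..<t choose t'}" for l
    unfolding B_def by blast
  ultimately have "cover_free_family r w ((t - r - w) choose (t' - r)) t {..<t choose t'} B"
    unfolding cover_free_family_def by simp
  then show ?thesis
    by blast
qed

lemma N_cff_eq_choose:
  assumes "r > 0"
  shows "N_cff r w ((t - r - w) choose (t' - r)) t = t choose t'"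
  unfolding N_cff_def
proof (rule Least_equality)
  show "\<exists>X B. cover_free_family r w ((t - r - w) choose (t' - r)) t X B \<and> card X = t choose t'"
    using ex_cover_free_family_of_subsets[OF assms] card_lessThan by blast
next
  fix n :: nat
  assume "\<exists>X B. cover_free_family r w ((t - r - w) choose (t' - r)) t X B \<and> card X = n"
  then obtain X B where cff: "cover_free_family r w ((t - r - w) choose (t' - r)) t X B"
    and "card X = n"
    by blast
  have "finite X"
    using cff unfolding cover_free_family_def by blast
  moreover have "\<forall>e\<in>bg_edges (bi_intersection_graph t r w). (t - r - w) choose (t' - r)
      \<le> card {p\<in>X. e \<in> fst (point_biclique t r w B p) \<times> snd (point_biclique t r w B p)}"
  proof
    fix e assume "e \<in> bg_edges (bi_intersection_graph t r w)"
    then show "(t - r - w) choose (t' - r)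
        \<le> card {p\<in>X. e \<in> fst (point_biclique t r w B p) \<times> snd (point_biclique t r w B p)}"
      using cover_free_family_point_biclique_cover[OF cff assms, of "fst e" "snd e"] by simp
  qed
  ultimately have "t choose t' \<le> card X"
    using biclique_point_biclique by (intro biclique_cover_card_ge) simp_all
  then show "t choose t' \<le> n"
    using \<open>card X = n\<close> by simp
qed

end

theorem theorem1:
  fixes r w t t' d :: nat
  assumes "r > 0" and "w > 0" and "t > 0" and "t \<ge> r + w"
    and "t' \<le> t"
    and "\<forall>x\<le>t. (x choose r) * ((t - x) choose w) \<le> (t' choose r) * ((t - t') choose w)"
    and "d = (t - r - w) choose (t' - r)"
  shows "N_cff r w d t = bc_d d (bi_intersection_graph t r w)
       \<and> bc_d d (bi_intersection_graph t r w) = bp_d d (bi_intersection_graph t r w)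
       \<and> bp_d d (bi_intersection_graph t r w) = t choose t'"
  using N_cff_eq_choose[OF assms(4,5,6,1)] bc_d_bi_intersection_graph[OF assms(4,5,6)]
    bp_d_bi_intersection_graph[OF assms(4,5,6)] assms(7)
  by simp

end
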